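(* For every $n\ge2$, in the matching market with $n$ agents and $n$ items, every deterministic truthful non-bossy mechanism has rank-approximation factor at least $n-1$.
   Context: Matching market: $n$ agents and $m$ items (here $m=n$); each agent $j$ reports any strict total order $\succ_j$ on the items. An outcome is a matching; an unmatched agent receives the null item, ranked below every item. A deterministic mechanism maps each profile to a matching. It is truthful if for every agent $j$, $\succ_{-j}$, and $\succ_j,\succ'_j$, the item $j$ receives under $(\succ_j,\succ_{-j})$ is weakly preferred under $\succ_j$ to the item $j$ receives under $(\succ'_j,\succ_{-j})$. It is non-bossy if whenever an agent changes his reported order and his own allocated item stays the same, the whole output matching stays the same. $\mathrm{rank}_i(M;\succ)$ is the number of agents assigned one of their top-$i$ items by $M$, $\mathrm{maxrank}_i(\succ)$ its maximum over matchings; a mechanism has rank-approximation factor $\alpha$ if on every profile its output satisfies $\mathrm{rank}_i\ge\mathrm{maxrank}_i/\alpha$ for all $i$ (so a mechanism has factor smaller than $\alpha$ only if this holds for some value below $\alpha$). *)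

theory Defs
  imports Complex_Main
begin

text \<open>A preference order of an agent is a list
  enumerating all n items, most preferred first (a strict total order on the items).
  An outcome is a list of length n; entry j is Some a (agent j gets item a) or
  None (agent j gets the null item, ranked below all items).\<close>

definition valid_pref :: "nat \<Rightarrow> nat list \<Rightarrow> bool" where
  "valid_pref n l \<longleftrightarrow> distinct l \<and> set l = {0..<n}"

definition valid_profile :: "nat \<Rightarrow> nat list list \<Rightarrow> bool" where
  "valid_profile n P \<longleftrightarrow> length P = n \<and> (\<forall>j<n. valid_pref n (P ! j))"

definition is_matching :: "nat \<Rightarrow> nat option list \<Rightarrow> bool" where
  "is_matching n M \<longleftrightarrow> length M = n
     \<and> (\<forall>j<n. \<forall>a. M ! j = Some a \<longrightarrow> a < n)
     \<and> (\<forall>j<n. \<forall>k<n. \<forall>a. j \<noteq> k \<and> M ! j = Some a \<longrightarrow> M ! k \<noteq> Some a)"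

text \<open>Position (0-based) of an item in a preference list (0 = most preferred).\<close>
fun index :: "nat list \<Rightarrow> nat \<Rightarrow> nat" where
  "index [] a = 0"
| "index (x # xs) a = (if x = a then 0 else Suc (index xs a))"

fun pos :: "nat list \<Rightarrow> nat option \<Rightarrow> nat" where
  "pos l None = length l"
| "pos l (Some a) = index l a"

definition weakly_prefers :: "nat list \<Rightarrow> nat option \<Rightarrow> nat option \<Rightarrow> bool" where
  "weakly_prefers l x y \<longleftrightarrow> pos l x \<le> pos l y"

type_synonym mechanism = "nat list list \<Rightarrow> nat option list"

definition is_mechanism :: "nat \<Rightarrow> mechanism \<Rightarrow> bool" where
  "is_mechanism n f \<longleftrightarrow> (\<forall>P. valid_profile n P \<longrightarrow> is_matching n (f P))"

definition truthful :: "nat \<Rightarrow> mechanism \<Rightarrow> bool" where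
  "truthful n f \<longleftrightarrow> (\<forall>P j l'. valid_profile n P \<and> j < n \<and> valid_pref n l' \<longrightarrow>
      weakly_prefers (P ! j) (f P ! j) (f (P[j := l']) ! j))"

definition non_bossy :: "nat \<Rightarrow> mechanism \<Rightarrow> bool" where
  "non_bossy n f \<longleftrightarrow> (\<forall>P j l'. valid_profile n P \<and> j < n \<and> valid_pref n l' \<longrightarrow>
      f (P[j := l']) ! j = f P ! j \<longrightarrow> f (P[j := l']) = f P)"

definition rank_i :: "nat \<Rightarrow> nat \<Rightarrow> nat option list \<Rightarrow> nat list list \<Rightarrow> nat" where
  "rank_i n i M P = card {j. j < n \<and> (\<exists>a. M ! j = Some a \<and> index (P ! j) a < i)}"

definition maxrank_i :: "nat \<Rightarrow> nat \<Rightarrow> nat list list \<Rightarrow> nat" where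
  "maxrank_i n i P = Max {rank_i n i M P | M. is_matching n M}"

definition has_rank_factor :: "nat \<Rightarrow> mechanism \<Rightarrow> real \<Rightarrow> bool" where
  "has_rank_factor n f \<alpha> \<longleftrightarrow> \<alpha> > 0 \<and>
     (\<forall>P i. valid_profile n P \<longrightarrow> real (rank_i n i (f P) P) \<ge> real (maxrank_i n i P) / \<alpha>)"

end

theory Submission
  imports Defs
begin

text \<open>Let every agent report the identity order 0 \<succ> 1 \<succ> \<dots> \<succ> n-1 and let M be the outcome.
  Truthfulness and non-bossiness make the mechanism invariant under any report that does not
  enlarge an agent's upper contour set at its allocated item. So an agent holding item y > 0 may
  report y-1 \<succ> y \<succ> \<dots>, and an unmatched agent may put any item on top, without changing M.
  Choosing these top items distinct, n-1 agents have pairwise different first choices, so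
  maxrank_1 \<ge> n-1, whereas under M only the holder of item 0 gets a first choice: rank_1 \<le> 1.\<close>

lemma index_le_length: "index l a \<le> length l"
  by (induct l) auto

lemma index_less_length: "a \<in> set l \<Longrightarrow> index l a < length l"
  by (induct l) auto

lemma index_inject: "a \<in> set l \<Longrightarrow> b \<in> set l \<Longrightarrow> index l a = index l b \<Longrightarrow> a = b"
  by (induct l) (auto split: if_splits)

lemma index_append_left: "a \<in> set xs \<Longrightarrow> index (xs @ ys) a = index xs a"
  by (induct xs) auto

lemma index_nth: "distinct l \<Longrightarrow> k < length l \<Longrightarrow> index l (l ! k) = k"
proof (induct l arbitrary: k)
  case (Cons x xs)
  then show ?case by (cases k) (auto simp: nth_mem)
qed simp

lemma index_upt: "b < n \<Longrightarrow> index [0..<n] b = b"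
  using index_nth[of "[0..<n]" b] by simp

lemma length_valid_pref: "valid_pref n l \<Longrightarrow> length l = n"
  unfolding valid_pref_def using distinct_card by fastforce

lemma pos_le_pos_None: "pos l z \<le> pos l None"
  by (cases z) (auto simp: index_le_length)

lemma pos_inject:
  assumes l: "valid_pref n l" and "set_option x \<subseteq> {0..<n}" "set_option y \<subseteq> {0..<n}"
    and eq: "pos l x = pos l y"
  shows "x = y"
proof -
  have x: "set_option x \<subseteq> set l" and y: "set_option y \<subseteq> set l" and len: "length l = n"
    using assms length_valid_pref[OF l] unfolding valid_pref_def by auto
  show ?thesis
  proof (cases x; cases y)
    fix a b assume "x = Some a" "y = Some b"
    then show ?thesis using x y eq index_inject by auto
  qed (use x y eq len index_less_length[of _ l] in \<open>fastforce+\<close>)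
qed

lemma set_option_matching_nth:
  assumes "is_matching n M" "j < n"
  shows "set_option (M ! j) \<subseteq> {0..<n}"
proof
  fix a assume "a \<in> set_option (M ! j)"
  then have "M ! j = Some a" by simp
  with assms have "a < n" unfolding is_matching_def by blast
  then show "a \<in> {0..<n}" by simp
qed

lemma card_receivers_le_1:
  assumes "is_matching n M"
  shows "card {j. j < n \<and> M ! j = Some a} \<le> 1"
proof -
  have "\<forall>j\<in>{j. j < n \<and> M ! j = Some a}. \<forall>k\<in>{j. j < n \<and> M ! j = Some a}. j = k"
    using assms unfolding is_matching_def by blast
  then show ?thesis
    using card_le_Suc0_iff_eq[of "{j. j < n \<and> M ! j = Some a}"] by simp
qed

definition upper_contour :: "nat list \<Rightarrow> nat option \<Rightarrow> nat option set" where
  "upper_contour l z = {x. pos l x \<le> pos l z}"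

text \<open>Maskin monotonicity. Truthfulness applied in both directions, together with the contour
  inclusion, pins agent j's item; non-bossiness then pins the whole matching.\<close>
lemma mechanism_invariant_under_monotonic_report:
  assumes mech: "is_mechanism n f" and tr: "truthful n f" and nb: "non_bossy n f"
    and P: "valid_profile n P" and j: "j < n" and l': "valid_pref n l'"
    and contour: "upper_contour l' (f P ! j) \<subseteq> upper_contour (P ! j) (f P ! j)"
  shows "f (P[j := l']) = f P"
proof -
  define Q where "Q = P[j := l']"
  have Q: "valid_profile n Q"
    using P l' j unfolding valid_profile_def Q_def by (auto simp: nth_list_update)
  have Pj: "valid_pref n (P ! j)"
    using P j unfolding valid_profile_def by auto
  have Qj: "Q ! j = l'" and restore: "Q[j := P ! j] = P"
    using P j unfolding Q_def valid_profile_def by auto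
  have truthful_P: "pos (P ! j) (f P ! j) \<le> pos (P ! j) (f Q ! j)"
    using tr P j l' unfolding truthful_def weakly_prefers_def Q_def by blast
  have "pos l' (f Q ! j) \<le> pos l' (f P ! j)"
    using tr Q j Pj restore Qj unfolding truthful_def weakly_prefers_def by metis
  then have "pos (P ! j) (f Q ! j) \<le> pos (P ! j) (f P ! j)"
    using contour unfolding upper_contour_def by blast
  moreover have "set_option (f P ! j) \<subseteq> {0..<n}" "set_option (f Q ! j) \<subseteq> {0..<n}"
    using mech P Q j set_option_matching_nth unfolding is_mechanism_def by blast+
  ultimately have "f Q ! j = f P ! j"
    using pos_inject[OF Pj] truthful_P by (metis le_antisym)
  then show ?thesis
    using nb P j l' unfolding non_bossy_def Q_def by blast
qed

lemma mechanism_invariant_under_monotonic_profile: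
  assumes mech: "is_mechanism n f" and tr: "truthful n f" and nb: "non_bossy n f"
    and P: "valid_profile n P" and Q: "valid_profile n Q"
    and contour: "\<forall>j<n. upper_contour (Q ! j) (f P ! j) \<subseteq> upper_contour (P ! j) (f P ! j)"
  shows "f Q = f P"
proof -
  define mix where "mix k = map (\<lambda>j. if j < k then Q ! j else P ! j) [0..<n]" for k
  have valid_mix: "valid_profile n (mix k)" for k
    using P Q unfolding mix_def valid_profile_def by simp
  have "f (mix k) = f P" if "k \<le> n" for k
    using that
  proof (induct k)
    case 0
    have "mix 0 = P"
      using P unfolding mix_def valid_profile_def by (intro nth_equalityI) auto
    then show ?case by simp
  next
    case (Suc k)
    then have k: "k < n" and IH: "f (mix k) = f P" by simp_all
    have "mix (Suc k) = (mix k)[k := Q ! k]"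
      unfolding mix_def by (intro nth_equalityI) (auto simp: nth_list_update less_Suc_eq)
    moreover have "mix k ! k = P ! k"
      unfolding mix_def using k by simp
    moreover have "valid_pref n (Q ! k)"
      using Q k unfolding valid_profile_def by simp
    ultimately show ?case
      using mechanism_invariant_under_monotonic_report[OF mech tr nb valid_mix k] contour k IH
      by simp
  qed
  moreover have "mix n = Q"
    using Q unfolding mix_def valid_profile_def by (intro nth_equalityI) auto
  ultimately show ?thesis by auto
qed

lemma valid_pref_upt: "valid_pref n [0..<n]"
  unfolding valid_pref_def by simp

definition move_to_front :: "nat list \<Rightarrow> nat list \<Rightarrow> nat list" where
  "move_to_front xs l = xs @ filter (\<lambda>x. x \<notin> set xs) l"

lemma valid_pref_move_to_front:
  "valid_pref n l \<Longrightarrow> distinct xs \<Longrightarrow> set xs \<subseteq> {0..<n} \<Longrightarrow> valid_pref n (move_to_front xs l)"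
  unfolding valid_pref_def move_to_front_def by auto

lemma index_move_to_front:
  "a \<in> set xs \<Longrightarrow> index (move_to_front xs l) a = index xs a"
  unfolding move_to_front_def by (rule index_append_left)

lemma card_le_maxrank_i:
  assumes "S \<subseteq> {0..<n}" "inj_on \<sigma> S" "\<sigma> ` S \<subseteq> {0..<n}"
    and "\<forall>j\<in>S. index (P ! j) (\<sigma> j) < i"
  shows "card S \<le> maxrank_i n i P"
proof -
  define M where "M = map (\<lambda>j. if j \<in> S then Some (\<sigma> j) else None) [0..<n]"
  have M: "is_matching n M"
    using assms(2,3) unfolding M_def is_matching_def by (auto dest: inj_onD)
  have "rank_i n i M P = card S"
    using assms(1,4) unfolding rank_i_def M_def
    by (intro arg_cong[where f = card]) (auto split: if_splits)
  moreover have "finite {rank_i n i M P | M. is_matching n M}"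
    by (rule finite_subset[of _ "{..n}"])
      (auto simp: rank_i_def intro!: card_mono[of "{0..<n}", simplified])
  ultimately show ?thesis
    unfolding maxrank_i_def using M by (metis (mono_tags, lifting) Max_ge mem_Collect_eq)
qed

text \<open>Enough items outside the y - 1 remain for the unmatched agents, since holders of positive
  items and unmatched agents are at most n in number.\<close>
lemma obtain_distinct_top_choices:
  assumes M: "is_matching n M"
  obtains c where "\<forall>j<n. \<forall>y. M ! j = Some y \<longrightarrow> c j = y - 1"
    and "inj_on c {j. j < n \<and> M ! j \<noteq> Some 0}" and "\<forall>j<n. c j < n"
proof -
  define A where "A = {j. j < n \<and> (\<exists>y. M ! j = Some y \<and> y \<noteq> 0)}"
  define U where "U = {j. j < n \<and> M ! j = None}"
  define pred where "pred j = the (M ! j) - 1" for j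
  have M_lt: "\<And>j y. j < n \<Longrightarrow> M ! j = Some y \<Longrightarrow> y < n"
    and M_inj: "\<And>j k y. j < n \<Longrightarrow> k < n \<Longrightarrow> M ! j = Some y \<Longrightarrow> M ! k = Some y \<Longrightarrow> j = k"
    using M unfolding is_matching_def by blast+
  have inj_pred: "inj_on pred A"
    by (rule inj_onI) (auto simp: A_def pred_def dest: M_inj)
  have pred_A: "pred ` A \<subseteq> {0..<n}"
    unfolding A_def pred_def using M_lt by fastforce
  have "card A + card U = card (A \<union> U)"
    by (rule card_Un_disjoint[symmetric]) (auto simp: A_def U_def)
  also have "\<dots> \<le> card {0..<n}"
    by (rule card_mono) (auto simp: A_def U_def)
  finally have "card U \<le> card ({0..<n} - pred ` A)"
    using card_Diff_subset[OF finite_imageI pred_A] card_image[OF inj_pred]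
    by (simp add: A_def)
  then obtain h where h: "h ` U \<subseteq> {0..<n} - pred ` A" "inj_on h U"
    using card_le_inj[of U "{0..<n} - pred ` A"] by (auto simp: U_def)
  define c where "c j = (if M ! j = None then h j else pred j)" for j
  have inj_c: "inj_on c (A \<union> U)"
  proof (rule inj_on_Un[THEN iffD2], intro conjI)
    show "inj_on c A" using inj_pred by (auto simp: c_def A_def inj_on_def)
    show "inj_on c U" using h(2) by (auto simp: c_def U_def inj_on_def)
    show "c ` (A - U) \<inter> c ` (U - A) = {}" using h(1) by (auto simp: c_def A_def U_def)
  qed
  show thesis
  proof (rule that)
    show "\<forall>j<n. \<forall>y. M ! j = Some y \<longrightarrow> c j = y - 1"
      by (simp add: c_def pred_def)
    have "{j. j < n \<and> M ! j \<noteq> Some 0} = A \<union> U"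
      by (auto simp: A_def U_def)
    then show "inj_on c {j. j < n \<and> M ! j \<noteq> Some 0}"
      using inj_c by simp
    show "\<forall>j<n. c j < n"
      using h(1) M_lt unfolding c_def pred_def U_def by (fastforce split: option.split)
  qed
qed

lemma obtain_profile_with_rank_1_gap:
  assumes M: "is_matching n M"
  obtains Q where "valid_profile n Q"
    and "\<forall>j<n. upper_contour (Q ! j) (M ! j) \<subseteq> upper_contour [0..<n] (M ! j)"
    and "rank_i n 1 M Q \<le> 1" and "n - 1 \<le> maxrank_i n 1 Q"
proof -
  obtain c where c_pred: "\<forall>j<n. \<forall>y. M ! j = Some y \<longrightarrow> c j = y - 1"
    and c_inj: "inj_on c {j. j < n \<and> M ! j \<noteq> Some 0}" and c_lt: "\<forall>j<n. c j < n"
    using obtain_distinct_top_choices[OF M] by blast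
  have M_lt: "\<And>j y. j < n \<Longrightarrow> M ! j = Some y \<Longrightarrow> y < n"
    using M unfolding is_matching_def by blast
  define report where "report j = (case M ! j of
      None \<Rightarrow> move_to_front [c j] [0..<n]
    | Some y \<Rightarrow> if y = 0 then [0..<n] else move_to_front [y - 1, y] [0..<n])" for j
  define Q where "Q = map report [0..<n]"
  have Q: "valid_profile n Q"
    using valid_pref_upt c_lt M_lt
    unfolding Q_def valid_profile_def report_def
    by (auto intro!: valid_pref_move_to_front less_imp_diff_less split: option.split)
  moreover have "upper_contour (Q ! j) (M ! j) \<subseteq> upper_contour [0..<n] (M ! j)"
    if j: "j < n" for j
  proof (cases "M ! j")
    case None
    then show ?thesis
      using pos_le_pos_None[of "[0..<n]"] by (auto simp: upper_contour_def)
  next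
    case (Some y)
    then have y: "y < n" using M_lt j by blast
    have "upper_contour (move_to_front [y - 1, y] [0..<n]) (Some y)
        \<subseteq> upper_contour [0..<n] (Some y)" if "y \<noteq> 0"
    proof
      fix x assume "x \<in> upper_contour (move_to_front [y - 1, y] [0..<n]) (Some y)"
      then show "x \<in> upper_contour [0..<n] (Some y)"
        using that y index_upt[of _ n] unfolding upper_contour_def
        by (cases x) (auto simp: index_move_to_front move_to_front_def split: if_splits)
    qed
    then show ?thesis
      using Some j by (auto simp: Q_def report_def)
  qed
  moreover have "rank_i n 1 M Q \<le> card {j. j < n \<and> M ! j = Some 0}"
  proof -
    have "index (Q ! j) y = 1" if "j < n" "M ! j = Some y" "y \<noteq> 0" for j y
      using that by (simp add: Q_def report_def index_move_to_front)
    then show ?thesis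
      unfolding rank_i_def by (intro card_mono) fastforce+
  qed
  moreover have "n - 1 \<le> maxrank_i n 1 Q"
  proof -
    define S where "S = {j. j < n \<and> M ! j \<noteq> Some 0}"
    have "{0..<n} = S \<union> {j. j < n \<and> M ! j = Some 0}"
      by (auto simp: S_def)
    then have "n \<le> card S + card {j. j < n \<and> M ! j = Some 0}"
      using card_Un_le[of S] by (metis card_atLeastLessThan diff_zero)
    then have "n \<le> card S + 1"
      using card_receivers_le_1[OF M, of 0] by linarith
    moreover have "card S \<le> maxrank_i n 1 Q"
      unfolding S_def
      by (rule card_le_maxrank_i[OF _ c_inj])
        (use c_lt c_pred in \<open>auto simp: Q_def report_def index_move_to_front split: option.split\<close>)
    ultimately show ?thesis by linarith
  qed
  ultimately show thesis
    using card_receivers_le_1[OF M, of 0] by (intro that) auto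
qed

lemma maxrank_le_factor_mult_rank:
  assumes "has_rank_factor n f \<alpha>" "valid_profile n P"
  shows "real (maxrank_i n i P) \<le> \<alpha> * real (rank_i n i (f P) P)"
proof -
  have "\<alpha> > 0" "real (maxrank_i n i P) / \<alpha> \<le> real (rank_i n i (f P) P)"
    using assms unfolding has_rank_factor_def by auto
  then show ?thesis by (simp add: pos_divide_le_eq mult.commute)
qed

theorem theorem8:
  fixes n :: nat and f :: mechanism and \<alpha> :: real
  assumes "n \<ge> 2"
    and "is_mechanism n f"
    and "truthful n f"
    and "non_bossy n f"
    and "has_rank_factor n f \<alpha>"
  shows "\<alpha> \<ge> real n - 1"
proof -
  define P where "P = replicate n [0..<n]"
  have P: "valid_profile n P"
    unfolding P_def valid_profile_def using valid_pref_upt by simp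
  then have "is_matching n (f P)"
    using assms(2) unfolding is_mechanism_def by blast
  then obtain Q where Q: "valid_profile n Q"
    and contour: "\<forall>j<n. upper_contour (Q ! j) (f P ! j) \<subseteq> upper_contour [0..<n] (f P ! j)"
    and rank: "rank_i n 1 (f P) Q \<le> 1" and maxrank: "n - 1 \<le> maxrank_i n 1 Q"
    by (rule obtain_profile_with_rank_1_gap)
  have "f Q = f P"
    using mechanism_invariant_under_monotonic_profile[OF assms(2-4) P Q] contour
    by (simp add: P_def)
  have "real n - 1 \<le> real (maxrank_i n 1 Q)"
    using maxrank assms(1) by linarith
  also have "\<dots> \<le> \<alpha> * real (rank_i n 1 (f Q) Q)"
    using maxrank_le_factor_mult_rank[OF assms(5) Q] .
  also have "\<dots> \<le> \<alpha>"
    using rank \<open>f Q = f P\<close> assms(5) unfolding has_rank_factor_def by simp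
  finally show ?thesis .
qed

end
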